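(* Let $b,c\in\mathbb{R}$ with $b,c>0$ and $b\neq c$, and let $a=(a_0,a_1,a_2,a_3)=(0,b,c,0)$. Then every tropical recurrent minimal sequence satisfying $a$ is periodic if and only if either $b<c\le 2b$ or $c<b\le 2c$. In this case every tropical recurrent minimal sequence satisfying $a$ is periodic with period $3$.
   Context: Here $n=3$. A tropical recurrent sequence is a sequence $y=(y_j)_{j\in\mathbb{Z}}$ with $y_j\in\mathbb{R}\cup\{\infty\}$, not all equal to $\infty$. It satisfies $a$ if for every $k\in\mathbb{Z}$ the minimum $\min_{0\le i\le 3}\{a_i+y_{i+k}\}$ is attained for at least two different indices $i$. It is minimal if for every $j\in\mathbb{Z}$ there exists $k$ with $j-3\le k\le j$ such that $a_{j-k}+y_j=\min_{0\le i\le 3}\{a_i+y_{i+k}\}$. The sequence is periodic with period $d\ge1$ if $y_{j+d}=y_j$ for all $j$, and periodic if it has some period $d\ge 1$. *)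

theory Defs
  imports "HOL-Library.Extended_Real"
begin

text \<open>Tropical recurrent sequences for n = 3. Values in R \<union> {\<infinity>} are modelled as
  extended reals different from -\<infinity>. The coefficient vector a = (a_0,...,a_3)
  is a function nat \<Rightarrow> real, of which only indices 0..3 are used.\<close>

definition trop_seq :: "(int \<Rightarrow> ereal) \<Rightarrow> bool" where
  "trop_seq y \<longleftrightarrow> (\<forall>j. y j \<noteq> -\<infinity>) \<and> (\<exists>j. y j \<noteq> \<infinity>)"

definition trop_min :: "(nat \<Rightarrow> real) \<Rightarrow> (int \<Rightarrow> ereal) \<Rightarrow> int \<Rightarrow> ereal" where
  "trop_min a y k = Min ((\<lambda>i. ereal (a i) + y (k + int i)) ` {0..3})"

definition satisfies :: "(nat \<Rightarrow> real) \<Rightarrow> (int \<Rightarrow> ereal) \<Rightarrow> bool" where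
  "satisfies a y \<longleftrightarrow> (\<forall>k::int. \<exists>i1 i2. i1 \<le> 3 \<and> i2 \<le> 3 \<and> i1 \<noteq> i2 \<and>
      ereal (a i1) + y (k + int i1) = trop_min a y k \<and>
      ereal (a i2) + y (k + int i2) = trop_min a y k)"

definition minimal :: "(nat \<Rightarrow> real) \<Rightarrow> (int \<Rightarrow> ereal) \<Rightarrow> bool" where
  "minimal a y \<longleftrightarrow> (\<forall>j::int. \<exists>k. j - 3 \<le> k \<and> k \<le> j \<and>
      ereal (a (nat (j - k))) + y j = trop_min a y k)"

definition has_period :: "(int \<Rightarrow> ereal) \<Rightarrow> int \<Rightarrow> bool" where
  "has_period y d \<longleftrightarrow> d \<ge> 1 \<and> (\<forall>j. y (j + d) = y j)"

definition periodic :: "(int \<Rightarrow> ereal) \<Rightarrow> bool" where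
  "periodic y \<longleftrightarrow> (\<exists>d. has_period y d)"

end

theory Submission
  imports Defs
begin

text \<open>
  "The minimum is attained twice" says that no entry of a window is a strict minimum. Hence
  a window of four infinite entries forces its neighbours to be infinite, and since an infinite
  entry attaining a window minimum makes that whole window infinite, a minimal sequence
  satisfying \<open>a\<close> that is not identically \<open>\<infinity>\<close> is real-valued. If \<open>b \<le> 2c\<close>, \<open>c \<le> 2b\<close>
  and \<open>z (n + 3) < z n\<close>, then each of the four ways in which \<open>z n\<close> can attain a window
  minimum produces a window whose last entry is a strict minimum; hence \<open>z n \<le> z (n + 3)\<close>,
  and reversing the sequence, which swaps \<open>b\<close> and \<open>c\<close>, gives the opposite inequality.
  If \<open>c > 2b\<close>, the 3-periodic sequence \<open>0, 2b, b, \<dots>\<close> with the entries at \<open>1, 2, 4\<close>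
  replaced by \<open>c, c - b, c\<close> is minimal and satisfies \<open>a\<close> but is not periodic; for
  \<open>b > 2c\<close> its reversal serves.
\<close>

lemma Min_attained_twice_iff:
  fixes f :: "'a \<Rightarrow> 'b::linorder"
  assumes "finite A" "A \<noteq> {}"
  shows "(\<exists>i1\<in>A. \<exists>i2\<in>A. i1 \<noteq> i2 \<and> f i1 = Min (f ` A) \<and> f i2 = Min (f ` A))
    \<longleftrightarrow> (\<forall>i\<in>A. \<exists>j\<in>A. j \<noteq> i \<and> f j \<le> f i)"
proof
  assume "\<exists>i1\<in>A. \<exists>i2\<in>A. i1 \<noteq> i2 \<and> f i1 = Min (f ` A) \<and> f i2 = Min (f ` A)"
  then obtain i1 i2 where i12: "i1 \<in> A" "i2 \<in> A" "i1 \<noteq> i2" "f i1 = Min (f ` A)" "f i2 = Min (f ` A)"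
    by blast
  show "\<forall>i\<in>A. \<exists>j\<in>A. j \<noteq> i \<and> f j \<le> f i"
  proof
    fix i assume "i \<in> A"
    then have "Min (f ` A) \<le> f i" using assms by simp
    then show "\<exists>j\<in>A. j \<noteq> i \<and> f j \<le> f i"
      using i12 by (cases "i = i1") auto
  qed
next
  assume no_strict_min: "\<forall>i\<in>A. \<exists>j\<in>A. j \<noteq> i \<and> f j \<le> f i"
  have "Min (f ` A) \<in> f ` A"
    using assms by (intro Min_in) auto
  then obtain i1 where i1: "i1 \<in> A" "f i1 = Min (f ` A)"
    by auto
  then obtain i2 where i2: "i2 \<in> A" "i2 \<noteq> i1" "f i2 \<le> f i1"
    using no_strict_min by blast
  then have "f i2 = Min (f ` A)"
    using i1 assms by (simp add: order.antisym)
  then show "\<exists>i1\<in>A. \<exists>i2\<in>A. i1 \<noteq> i2 \<and> f i1 = Min (f ` A) \<and> f i2 = Min (f ` A)"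
    using i1 i2 by blast
qed

lemma all_nat_le_3_iff: "(\<forall>i::nat\<le>3. P i) \<longleftrightarrow> P 0 \<and> P 1 \<and> P 2 \<and> P 3"
  by (auto simp: le_Suc_eq numeral_3_eq_3 numeral_2_eq_2)

lemma ex_nat_le_3_iff: "(\<exists>i::nat\<le>3. P i) \<longleftrightarrow> P 0 \<or> P 1 \<or> P 2 \<or> P 3"
  by (auto simp: le_Suc_eq numeral_3_eq_3 numeral_2_eq_2)

lemma satisfies_iff:
  "satisfies a y \<longleftrightarrow>
    (\<forall>k. \<forall>i\<le>3. \<exists>j\<le>3. j \<noteq> i \<and> ereal (a j) + y (k + int j) \<le> ereal (a i) + y (k + int i))"
proof -
  have "{..3::nat} \<noteq> {}" by auto
  from Min_attained_twice_iff[OF finite_atMost this]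
  have "(\<exists>i1 i2. i1 \<le> 3 \<and> i2 \<le> 3 \<and> i1 \<noteq> i2 \<and>
      ereal (a i1) + y (k + int i1) = trop_min a y k \<and> ereal (a i2) + y (k + int i2) = trop_min a y k)
    \<longleftrightarrow> (\<forall>i\<le>3. \<exists>j\<le>3. j \<noteq> i \<and> ereal (a j) + y (k + int j) \<le> ereal (a i) + y (k + int i))"
    for k
    unfolding trop_min_def atLeast0AtMost Bex_def Ball_def atMost_iff
    by (simp only: conj_assoc ex_simps)
  then show ?thesis
    unfolding satisfies_def by (simp only:)
qed

lemma minimal_iff:
  "minimal a y \<longleftrightarrow>
    (\<forall>j. \<exists>i\<le>3. \<forall>l\<le>3. ereal (a i) + y j \<le> ereal (a l) + y (j - int i + int l))"
proof -
  have reindex: "(\<exists>k. j - 3 \<le> k \<and> k \<le> j \<and> ereal (a (nat (j - k))) + y j = trop_min a y k)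
      \<longleftrightarrow> (\<exists>i\<le>3. ereal (a i) + y j = trop_min a y (j - int i))" for j
  proof
    assume "\<exists>k. j - 3 \<le> k \<and> k \<le> j \<and> ereal (a (nat (j - k))) + y j = trop_min a y k"
    then obtain k where "j - 3 \<le> k" "k \<le> j" "ereal (a (nat (j - k))) + y j = trop_min a y k"
      by blast
    moreover have "j - int (nat (j - k)) = k" using \<open>k \<le> j\<close> by simp
    ultimately show "\<exists>i\<le>3. ereal (a i) + y j = trop_min a y (j - int i)"
      by (intro exI[of _ "nat (j - k)"]) auto
  next
    assume "\<exists>i\<le>3. ereal (a i) + y j = trop_min a y (j - int i)"
    then obtain i where "i \<le> 3" "ereal (a i) + y j = trop_min a y (j - int i)" by blast
    then show "\<exists>k. j - 3 \<le> k \<and> k \<le> j \<and> ereal (a (nat (j - k))) + y j = trop_min a y k"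
      by (intro exI[of _ "j - int i"]) auto
  qed
  have "ereal (a i) + y j = trop_min a y (j - int i) \<longleftrightarrow>
      (\<forall>l\<le>3. ereal (a i) + y j \<le> ereal (a l) + y (j - int i + int l))" if "i \<le> 3" for i j
    unfolding trop_min_def using that by (subst eq_Min_iff) (auto intro!: image_eqI[where x=i])
  then have "(\<exists>i\<le>3. ereal (a i) + y j = trop_min a y (j - int i)) \<longleftrightarrow>
      (\<exists>i\<le>3. \<forall>l\<le>3. ereal (a i) + y j \<le> ereal (a l) + y (j - int i + int l))" for j
    by blast
  moreover have "minimal a y \<longleftrightarrow> (\<forall>j. \<exists>i\<le>3. ereal (a i) + y j = trop_min a y (j - int i))"
    unfolding minimal_def reindex ..
  ultimately show ?thesis
    by (simp only:)
qed

lemma satisfies_reverse: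
  assumes "satisfies a y" and a': "\<And>i. i \<le> 3 \<Longrightarrow> a' i = a (3 - i)"
  shows "satisfies a' (\<lambda>j. y (- j))"
  unfolding satisfies_iff
proof (intro allI impI)
  fix k :: int and i :: nat
  assume "i \<le> 3"
  then obtain j where j: "j \<le> 3" "j \<noteq> 3 - i"
    "ereal (a j) + y (- k - 3 + int j) \<le> ereal (a (3 - i)) + y (- k - 3 + int (3 - i))"
    using assms(1) unfolding satisfies_iff by (meson diff_le_self)
  have "y (- k - 3 + int j) = y (- (k + int (3 - j)))" and "y (- k - 3 + int (3 - i)) = y (- (k + int i))"
    using j(1) \<open>i \<le> 3\<close> by (simp_all add: of_nat_diff algebra_simps)
  with j \<open>i \<le> 3\<close> show "\<exists>j'\<le>3. j' \<noteq> i \<and>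
      ereal (a' j') + y (- (k + int j')) \<le> ereal (a' i) + y (- (k + int i))"
    by (intro exI[of _ "3 - j"]) (auto simp: a')
qed

lemma minimal_reverse:
  assumes "minimal a y" and a': "\<And>i. i \<le> 3 \<Longrightarrow> a' i = a (3 - i)"
  shows "minimal a' (\<lambda>j. y (- j))"
  unfolding minimal_iff
proof
  fix j :: int
  obtain i where i: "i \<le> 3" "\<forall>l\<le>3. ereal (a i) + y (- j) \<le> ereal (a l) + y (- j - int i + int l)"
    using assms(1) unfolding minimal_iff by blast
  have "ereal (a' (3 - i)) + y (- j) \<le> ereal (a' l) + y (- (j - int (3 - i) + int l))" if "l \<le> 3" for l
  proof -
    have "y (- (j - int (3 - i) + int l)) = y (- j - int i + int (3 - l))"
      using i(1) that by (simp add: of_nat_diff algebra_simps)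
    then show ?thesis
      using i(1) i(2)[rule_format, of "3 - l"] that by (simp add: a')
  qed
  then show "\<exists>i\<le>3. \<forall>l\<le>3. ereal (a' i) + y (- j) \<le> ereal (a' l) + y (- (j - int i + int l))"
    by (intro exI[of _ "3 - i"]) auto
qed

lemma has_period_reverse_iff: "has_period (\<lambda>j. y (- j)) d \<longleftrightarrow> has_period y d"
  unfolding has_period_def by (metis add.commute minus_add_cancel minus_add_distrib)

lemma satisfies_infinite_entry:
  assumes "satisfies a y" "i \<le> 3" "\<And>l. l \<le> 3 \<Longrightarrow> l \<noteq> i \<Longrightarrow> y (k + int l) = \<infinity>"
  shows "y (k + int i) = \<infinity>"
proof -
  obtain j where "j \<le> 3" "j \<noteq> i" "ereal (a j) + y (k + int j) \<le> ereal (a i) + y (k + int i)"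
    using assms(1,2) unfolding satisfies_iff by blast
  with assms(3) have "ereal (a i) + y (k + int i) = \<infinity>"
    by simp
  then show ?thesis
    by simp
qed

lemma satisfies_infinite_window_spreads:
  assumes sat: "satisfies a y" and window: "\<And>l. l \<le> 3 \<Longrightarrow> y (k + int l) = \<infinity>"
  shows "y m = \<infinity>"
proof -
  have "\<forall>m. k - int n \<le> m \<and> m \<le> k + 3 + int n \<longrightarrow> y m = \<infinity>" for n
  proof (induction n)
    case 0
    show ?case
    proof (intro allI impI)
      fix m assume "k - int 0 \<le> m \<and> m \<le> k + 3 + int 0"
      then have "nat (m - k) \<le> 3" "m = k + int (nat (m - k))" by auto
      then show "y m = \<infinity>" using window by metis
    qed
  next
    case (Suc n)
    have "y (k - int n - 1 + int l) = \<infinity>" if "l \<le> 3" "l \<noteq> 0" for l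
      using Suc.IH[rule_format, of "k - int n - 1 + int l"] that by simp
    with satisfies_infinite_entry[OF sat, where i = 0] have left: "y (k - int n - 1) = \<infinity>"
      by (metis add.right_neutral of_nat_0 zero_le)
    have "y (k + int n + 1 + int l) = \<infinity>" if "l \<le> 3" "l \<noteq> 3" for l
      using Suc.IH[rule_format, of "k + int n + 1 + int l"] that by simp
    with satisfies_infinite_entry[OF sat, where i = 3] have right: "y (k + int n + 1 + int 3) = \<infinity>"
      by blast
    show ?case
    proof (intro allI impI)
      fix m assume "k - int (Suc n) \<le> m \<and> m \<le> k + 3 + int (Suc n)"
      then consider "m = k - int n - 1" | "m = k + int n + 1 + int 3" | "k - int n \<le> m \<and> m \<le> k + 3 + int n"
        by linarith
      then show "y m = \<infinity>"
        using left right Suc.IH by cases auto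
    qed
  qed
  from this[of "nat \<bar>m - k\<bar>"] show ?thesis
    by (simp add: abs_if)
qed

lemma minimal_trop_seq_finite:
  assumes "trop_seq y" "satisfies a y" "minimal a y"
  shows "y j \<noteq> \<infinity>"
proof
  assume "y j = \<infinity>"
  obtain i where "i \<le> 3" and i: "\<forall>l\<le>3. ereal (a i) + y j \<le> ereal (a l) + y (j - int i + int l)"
    using assms(3) unfolding minimal_iff by blast
  have "y (j - int i + int l) = \<infinity>" if "l \<le> 3" for l
    using i[rule_format, OF that] \<open>y j = \<infinity>\<close> by simp
  then have "y m = \<infinity>" for m
    by (rule satisfies_infinite_window_spreads[OF assms(2)])
  then show False
    using assms(1) unfolding trop_seq_def by simp
qed

lemma minimal_trop_seq_real:
  assumes "trop_seq y" "satisfies a y" "minimal a y"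
  obtains z where "y = (\<lambda>j. ereal (z j))"
proof
  show "y = (\<lambda>j. ereal (real_of_ereal (y j)))"
  proof
    fix j
    have "y j \<noteq> \<infinity>" "y j \<noteq> - \<infinity>"
      using minimal_trop_seq_finite[OF assms] assms(1) unfolding trop_seq_def by auto
    then show "y j = ereal (real_of_ereal (y j))"
      by (cases "y j") auto
  qed
qed

lemma coefficients_reverse:
  assumes "i \<le> 3"
  shows "[0, c, b, 0] ! i = [0, b, c, 0] ! (3 - i)"
  using assms by (auto simp: le_Suc_eq numeral_3_eq_3 numeral_2_eq_2)

lemma satisfies_last_entry_not_strict_min:
  assumes "satisfies (\<lambda>i. [0, b, c, 0] ! i) (\<lambda>j. ereal (z j))"
  shows "z k \<le> z (k + 3) \<or> b + z (k + 1) \<le> z (k + 3) \<or> c + z (k + 2) \<le> z (k + 3)"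
  using assms[unfolded satisfies_iff, rule_format, of 3 k] unfolding ex_nat_le_3_iff
  by (simp add: add.commute)

lemma minimal_le_shift_3:
  fixes b c :: real and z :: "int \<Rightarrow> real"
  assumes "0 < b" "0 < c" "b \<le> 2 * c" "c \<le> 2 * b"
    and sat: "satisfies (\<lambda>i. [0, b, c, 0] ! i) (\<lambda>j. ereal (z j))"
    and min: "minimal (\<lambda>i. [0, b, c, 0] ! i) (\<lambda>j. ereal (z j))"
  shows "z n \<le> z (n + 3)"
proof (rule ccontr)
  assume "\<not> ?thesis"
  then have drop: "z (n + 3) < z n"
    by simp
  have last0: "z n \<le> z (n + 3) \<or> b + z (n + 1) \<le> z (n + 3) \<or> c + z (n + 2) \<le> z (n + 3)"
    using satisfies_last_entry_not_strict_min[OF sat, of n] by (simp add: algebra_simps)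
  have last1: "z (n - 1) \<le> z (n + 2) \<or> b + z n \<le> z (n + 2) \<or> c + z (n + 1) \<le> z (n + 2)"
    using satisfies_last_entry_not_strict_min[OF sat, of "n - 1"] by (simp add: algebra_simps)
  have last2: "z (n - 2) \<le> z (n + 1) \<or> b + z (n - 1) \<le> z (n + 1) \<or> c + z n \<le> z (n + 1)"
    using satisfies_last_entry_not_strict_min[OF sat, of "n - 2"] by (simp add: algebra_simps)
  obtain i where "i \<le> 3" and i: "\<forall>l\<le>3. ereal ([0, b, c, 0] ! i) + ereal (z n)
      \<le> ereal ([0, b, c, 0] ! l) + ereal (z (n - int i + int l))"
    using min unfolding minimal_iff by blast
  then have entry: "[0, b, c, 0] ! i + z n \<le> [0, b, c, 0] ! l + z (n - int i + int l)" if "l \<le> 3" for l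
    using that by simp
  from \<open>i \<le> 3\<close> have "i = 0 \<or> i = 1 \<or> i = 2 \<or> i = 3"
    by auto
  then consider
      "z n \<le> z (n + 3)"
    | "b + z n \<le> c + z (n + 1)" "b + z n \<le> z (n + 2)"
    | "c + z n \<le> b + z (n - 1)" "c + z n \<le> z (n + 1)"
    | "z n \<le> b + z (n - 2)" "z n \<le> c + z (n - 1)"
    using entry[of 1] entry[of 2] entry[of 3] by (auto simp: algebra_simps)
  then show False
  proof cases
    case 1
    then show False using drop by linarith
  next
    case 2
    then show False using drop last0 assms(1-4) by linarith
  next
    case 3
    then show False using drop last0 last1 assms(1-4) by linarith
  next
    case 4
    then show False using drop last0 last1 last2 assms(1-4) by linarith
  qed
qed

lemma minimal_has_period_3:
  fixes b c :: real
  assumes "0 < b" "0 < c" "b \<le> 2 * c" "c \<le> 2 * b"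
    and "trop_seq y" "satisfies (\<lambda>i. [0, b, c, 0] ! i) y" "minimal (\<lambda>i. [0, b, c, 0] ! i) y"
  shows "has_period y 3"
proof -
  obtain z where y: "y = (\<lambda>j. ereal (z j))"
    using minimal_trop_seq_real[OF assms(5-7)] .
  have "satisfies (\<lambda>i. [0, c, b, 0] ! i) (\<lambda>j. ereal (z (- j)))"
    using satisfies_reverse[OF assms(6) coefficients_reverse] y by simp
  moreover have "minimal (\<lambda>i. [0, c, b, 0] ! i) (\<lambda>j. ereal (z (- j)))"
    using minimal_reverse[OF assms(7) coefficients_reverse] y by simp
  ultimately have "z (j + 3) \<le> z j" for j
    using minimal_le_shift_3[OF assms(2,1,4,3), of "\<lambda>j. z (- j)" "- j - 3"] by (simp add: add.commute)
  moreover have "z j \<le> z (j + 3)" for j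
    using minimal_le_shift_3[OF assms(1-4)] assms(6,7) y by simp
  ultimately have "z (j + 3) = z j" for j
    by (simp add: order.antisym)
  then show ?thesis
    unfolding y has_period_def by simp
qed

lemma has_period_iterate:
  assumes "has_period y d"
  shows "y (j + int n * d) = y j"
proof (induction n)
  case 0
  then show ?case by simp
next
  case (Suc n)
  have "y (j + int (Suc n) * d) = y (j + int n * d + d)"
    by (simp add: algebra_simps)
  also have "\<dots> = y (j + int n * d)"
    using assms unfolding has_period_def by blast
  finally show ?case
    using Suc.IH by simp
qed

definition period3_pattern :: "real \<Rightarrow> int \<Rightarrow> real" where
  "period3_pattern b j = (if j mod 3 = 0 then 0 else if j mod 3 = 1 then 2 * b else b)"

definition perturbed_pattern :: "real \<Rightarrow> real \<Rightarrow> int \<Rightarrow> real" where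
  "perturbed_pattern b c j =
    (if j = 1 \<or> j = 4 then c else if j = 2 then c - b else period3_pattern b j)"

lemma perturbed_pattern_far_window:
  assumes "k \<le> -3 \<or> 5 \<le> k"
  shows "perturbed_pattern b c k = period3_pattern b (k mod 3)"
    and "perturbed_pattern b c (k + 1) = period3_pattern b (k mod 3 + 1)"
    and "perturbed_pattern b c (k + 2) = period3_pattern b (k mod 3 + 2)"
    and "perturbed_pattern b c (k + 3) = period3_pattern b (k mod 3)"
  using assms by (auto simp: perturbed_pattern_def period3_pattern_def mod_add_left_eq)

lemma perturbed_pattern_satisfies:
  assumes "0 < b" "2 * b < c"
  shows "satisfies (\<lambda>i. [0, b, c, 0] ! i) (\<lambda>j. ereal (perturbed_pattern b c j))"
proof -
  let ?a = "\<lambda>i. [0, b, c, 0] ! i" and ?z = "perturbed_pattern b c"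
  have "\<forall>i\<le>3. \<exists>j\<le>3. j \<noteq> i \<and> ?a j + ?z (k + int j) \<le> ?a i + ?z (k + int i)" for k
  proof (cases "k \<le> -3 \<or> 5 \<le> k")
    case True
    consider "k mod 3 = 0" | "k mod 3 = 1" | "k mod 3 = 2"
      by linarith
    then show ?thesis
      using assms unfolding all_nat_le_3_iff ex_nat_le_3_iff
      by cases (simp_all add: perturbed_pattern_far_window[OF True] period3_pattern_def)
  next
    case False
    then have "k = -2 \<or> k = -1 \<or> k = 0 \<or> k = 1 \<or> k = 2 \<or> k = 3 \<or> k = 4"
      by auto
    then show ?thesis
      using assms unfolding all_nat_le_3_iff ex_nat_le_3_iff
      by (elim disjE) (simp_all add: perturbed_pattern_def period3_pattern_def)
  qed
  then show ?thesis
    unfolding satisfies_iff by simp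
qed

lemma perturbed_pattern_minimal:
  assumes "0 < b" "2 * b < c"
  shows "minimal (\<lambda>i. [0, b, c, 0] ! i) (\<lambda>j. ereal (perturbed_pattern b c j))"
proof -
  let ?a = "\<lambda>i. [0, b, c, 0] ! i" and ?z = "perturbed_pattern b c"
  have "\<exists>i\<le>3. \<forall>l\<le>3. ?a i + ?z j \<le> ?a l + ?z (j - int i + int l)" for j
  proof (cases "j \<le> -3 \<or> 5 \<le> j")
    case True
    consider "j mod 3 = 0" | "j mod 3 = 1" | "j mod 3 = 2"
      by linarith
    then have "\<forall>l\<le>3. ?a 0 + ?z j \<le> ?a l + ?z (j + int l)"
      using assms unfolding all_nat_le_3_iff
      by cases (simp_all add: perturbed_pattern_far_window[OF True] period3_pattern_def)
    then show ?thesis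
      by (intro exI[of _ 0]) simp
  next
    case False
    then have "j = -2 \<or> j = -1 \<or> j = 0 \<or> j = 1 \<or> j = 2 \<or> j = 3 \<or> j = 4"
      by auto
    then show ?thesis
      using assms unfolding all_nat_le_3_iff ex_nat_le_3_iff
      by (elim disjE) (simp_all add: perturbed_pattern_def period3_pattern_def)
  qed
  then show ?thesis
    unfolding minimal_iff by simp
qed

lemma perturbed_pattern_not_periodic:
  assumes "c \<noteq> 2 * b"
  shows "\<not> periodic (\<lambda>j. ereal (perturbed_pattern b c j))"
proof
  assume "periodic (\<lambda>j. ereal (perturbed_pattern b c j))"
  then obtain d where d: "has_period (\<lambda>j. ereal (perturbed_pattern b c j)) d"
    unfolding periodic_def by blast
  then have "perturbed_pattern b c (4 + 3 * d) = perturbed_pattern b c 4"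
    using has_period_iterate[OF d, of 4 3] by simp
  moreover have "1 \<le> d"
    using d unfolding has_period_def by blast
  then have "(4 + 3 * d) mod 3 = 1" and "5 \<le> 4 + 3 * d"
    by presburger+
  ultimately show False
    using assms by (simp add: perturbed_pattern_def period3_pattern_def)
qed

lemma exists_nonperiodic_minimal:
  fixes b c :: real
  assumes "0 < b" "0 < c" "2 * b < c \<or> 2 * c < b"
  shows "\<exists>y. trop_seq y \<and> satisfies (\<lambda>i. [0, b, c, 0] ! i) y \<and> minimal (\<lambda>i. [0, b, c, 0] ! i) y
    \<and> \<not> periodic y"
  using assms(3)
proof
  assume "2 * b < c"
  then show ?thesis
    using assms(1) perturbed_pattern_satisfies perturbed_pattern_minimal perturbed_pattern_not_periodic
    by (intro exI[of _ "\<lambda>j. ereal (perturbed_pattern b c j)"]) (auto simp: trop_seq_def)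
next
  assume "2 * c < b"
  let ?y = "\<lambda>j. ereal (perturbed_pattern c b j)"
  have "satisfies (\<lambda>i. [0, b, c, 0] ! i) (\<lambda>j. ?y (- j))"
    using satisfies_reverse[OF perturbed_pattern_satisfies[OF assms(2) \<open>2 * c < b\<close>] coefficients_reverse] .
  moreover have "minimal (\<lambda>i. [0, b, c, 0] ! i) (\<lambda>j. ?y (- j))"
    using minimal_reverse[OF perturbed_pattern_minimal[OF assms(2) \<open>2 * c < b\<close>] coefficients_reverse] .
  moreover have "\<not> periodic (\<lambda>j. ?y (- j))"
    using perturbed_pattern_not_periodic[of b c] has_period_reverse_iff[of ?y] \<open>2 * c < b\<close>
    unfolding periodic_def by simp
  ultimately show ?thesis
    by (intro exI[of _ "\<lambda>j. ?y (- j)"]) (simp add: trop_seq_def)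
qed

theorem proposition2:
  fixes b c :: real
  assumes "b > 0" and "c > 0" and "b \<noteq> c"
  defines "a \<equiv> (\<lambda>i. [0, b, c, 0] ! i)"
  shows "((\<forall>y. trop_seq y \<and> satisfies a y \<and> minimal a y \<longrightarrow> periodic y)
            \<longleftrightarrow> ((b < c \<and> c \<le> 2 * b) \<or> (c < b \<and> b \<le> 2 * c)))
         \<and> (((b < c \<and> c \<le> 2 * b) \<or> (c < b \<and> b \<le> 2 * c)) \<longrightarrow>
            (\<forall>y. trop_seq y \<and> satisfies a y \<and> minimal a y \<longrightarrow> has_period y 3))"
proof -
  have range: "(b < c \<and> c \<le> 2 * b) \<or> (c < b \<and> b \<le> 2 * c) \<longleftrightarrow> b \<le> 2 * c \<and> c \<le> 2 * b"
    using assms(3) by linarith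
  have "has_period y 3" if "b \<le> 2 * c" "c \<le> 2 * b" "trop_seq y" "satisfies a y" "minimal a y" for y
    using minimal_has_period_3 assms(1,2) that unfolding a_def by blast
  moreover have "\<exists>y. trop_seq y \<and> satisfies a y \<and> minimal a y \<and> \<not> periodic y"
    if "\<not> (b \<le> 2 * c \<and> c \<le> 2 * b)"
    using exists_nonperiodic_minimal assms(1,2) that unfolding a_def by force
  ultimately show ?thesis
    unfolding range periodic_def by blast
qed

end
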